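(* Let $k$, $\Lambda_{\mathbf q}$, $G$, $\chi_{g,l}$, $\mathbb K$, $\Delta_{\mathbb K}$ and the cochains $(x^\alpha\otimes g)\epsilon_\beta^*$ be as in the context, and let the cup product of cochains $f,g'\in\operatorname{Hom}_{\Lambda_{\mathbf q}^e}(\mathbb K,\Lambda_{\mathbf q}\rtimes G)$ be $f\smile g'=\mu\circ(f\otimes_{\Lambda_{\mathbf q}}g')\circ\Delta_{\mathbb K}$, where $\mu$ is multiplication in $\Lambda_{\mathbf q}\rtimes G$. If $\alpha,\gamma\in\{0,1\}^n$, $\beta,\kappa\in\mathbb N^n$ and $g,h\in G$, then $$(x^\alpha\otimes g)\epsilon_\beta^*\smile(x^\gamma\otimes h)\epsilon_\kappa^*=\prod_{l=1}^n\Big(\chi_{g,l}^{\gamma_l}\prod_{k<l}q_{k,l}^{\kappa_k\beta_l-\gamma_k\alpha_l}(-1)^{-\gamma_k\alpha_l}\Big)(x^{\alpha+\gamma}\otimes gh)\epsilon_{\beta+\kappa}^*.$$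
   Context: $k$ is a field of characteristic $0$. Fix $n\ge1$, $q_{i,j}\in k^*$ with $q_{j,i}=q_{i,j}^{-1}$, $q_{i,i}=-1$, and $\Lambda_{\mathbf q}=k\langle x_1,\dots,x_n\mid x_ix_j=-q_{i,j}x_jx_i,\ x_i^2=0\rangle$. For $\alpha\in\mathbb N^n$, $x^\alpha=x_1^{\alpha_1}\cdots x_n^{\alpha_n}$ (which is $0$ if some $\alpha_i\ge2$). $G$ is a finite group acting by algebra automorphisms with ${}^gx_i=\chi_{g,i}x_i$. $\Lambda_{\mathbf q}\rtimes G=\Lambda_{\mathbf q}\otimes kG$ with $(\lambda\otimes g)(\lambda'\otimes h)=\lambda({}^g\lambda')\otimes gh$, a $\Lambda_{\mathbf q}$-bimodule via $\lambda\mapsto\lambda\otimes1$. For $\beta\in\mathbb N^n$, $|\beta|=\sum\beta_i$, $[j]$ is the $j$-th unit vector. $\mathbb K$ is the projective $\Lambda_{\mathbf q}^e$-resolution of $\Lambda_{\mathbf q}$ with $\mathbb K_m=\bigoplus_{|\beta|=m}\Lambda_{\mathbf q}\epsilon_\beta\Lambda_{\mathbf q}$ (free on $\epsilon_\beta$), differential $\delta(\epsilon_\beta)=\sum_{j=1}^n\big(\prod_{l<j}q_{l,j}^{\beta_l}x_j\epsilon_{\beta-[j]}+(-1)^{\sum_{l\le j}\beta_l}\prod_{l>j}(-q_{j,l})^{\beta_l}\epsilon_{\beta-[j]}x_j\big)$ ($\epsilon_{\beta-[j]}:=0$ if $\beta_j=0$), augmentation $\epsilon_0\mapsto1$. It carries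 the diagonal $\Delta_{\mathbb K}:\mathbb K\to\mathbb K\otimes_{\Lambda_{\mathbf q}}\mathbb K$, $\Delta_{\mathbb K}(\epsilon_\beta)=\sum_{\alpha+\gamma=\beta}\prod_{1\le k<l\le n}q_{k,l}^{\gamma_k\alpha_l}\,\epsilon_\alpha\otimes_{\Lambda_{\mathbf q}}\epsilon_\gamma$ (sum over $\alpha,\gamma\in\mathbb N^n$); this corresponds to the restriction of the bar-resolution diagonal under the identification $\epsilon_\beta\mapsto 1\otimes f_\beta\otimes1$ of $\mathbb K$ with a subcomplex of the bar resolution, so the cup product defined with $\Delta_{\mathbb K}$ induces the usual cup product on $\mathrm{HH}^*(\Lambda_{\mathbf q},\Lambda_{\mathbf q}\rtimes G)$. The cochain $(x^\alpha\otimes g)\epsilon_\beta^*\in\operatorname{Hom}_{\Lambda_{\mathbf q}^e}(\mathbb K_{|\beta|},\Lambda_{\mathbf q}\rtimes G)$ sends $\epsilon_\beta\mapsto x^\alpha\otimes g$ and all other $\epsilon_{\beta'}\mapsto0$. *)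

theory Defs
  imports "HOL-Algebra.Group"
begin

text \<open>Multi-indices in N^n are functions nat => nat supported on {1..n}.
  Exterior exponents ({0,1}^n) additionally take values at most 1.\<close>

definition multi :: "nat \<Rightarrow> (nat \<Rightarrow> nat) set" where
  "multi n = {\<beta>. \<forall>i. \<beta> i \<noteq> 0 \<longrightarrow> 1 \<le> i \<and> i \<le> n}"

definition bits :: "nat \<Rightarrow> (nat \<Rightarrow> nat) set" where
  "bits n = {\<alpha>. \<alpha> \<in> multi n \<and> (\<forall>i. \<alpha> i \<le> 1)}"

text \<open>Normal-form multiplication in the quantum exterior algebra, derived from the
  defining relations x_i x_j = -q_ij x_j x_i and x_i^2 = 0:
  left multiplication of the generator x_i on a normal monomial x^gamma
  (with gamma in bits) moves x_i past x_j (j < i) picking up -q_ij each time,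
  and gives 0 if x_i already occurs.
  lmc q alpha m gamma = (c, delta) means
  x_1^alpha_1 ... x_m^alpha_m * x^gamma = c * x^delta.\<close>

fun lmc :: "(nat \<Rightarrow> nat \<Rightarrow> 'k::field) \<Rightarrow> (nat \<Rightarrow> nat) \<Rightarrow> nat \<Rightarrow> (nat \<Rightarrow> nat)
             \<Rightarrow> 'k \<times> (nat \<Rightarrow> nat)" where
  "lmc q \<alpha> 0 \<gamma> = (1, \<gamma>)"
| "lmc q \<alpha> (Suc m) \<gamma> =
     (let (c1, \<delta>) =
        (if \<alpha> (Suc m) = 0 then (1, \<gamma>)
         else if \<gamma> (Suc m) = 0
           then ((\<Prod>j\<in>{1..m}. (- q (Suc m) j) ^ (\<gamma> j)), \<gamma>(Suc m := 1))
           else (0, \<gamma>(Suc m := Suc (\<gamma> (Suc m)))));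
          (c2, \<epsilon>) = lmc q \<alpha> m \<delta>
      in (c2 * c1, \<epsilon>))"

text \<open>Elements of Lambda_q # G: coefficient functions on the basis
  {x^alpha \<otimes> g | alpha in bits n, g in carrier G}.
  xb n alpha g is the element x^alpha \<otimes> g (zero if alpha is not a 0/1 vector).\<close>

type_synonym ('k, 'g) skew = "(nat \<Rightarrow> nat) \<times> 'g \<Rightarrow> 'k"

definition xb :: "nat \<Rightarrow> (nat \<Rightarrow> nat) \<Rightarrow> 'g \<Rightarrow> ('k::field, 'g) skew" where
  "xb n \<alpha> g = (\<lambda>(\<delta>, k). if \<alpha> \<in> bits n \<and> \<delta> = \<alpha> \<and> k = g then 1 else 0)"

text \<open>Product of basis elements:
  (x^alpha \<otimes> g)(x^gamma \<otimes> h) = x^alpha (g.x^gamma) \<otimes> gh, with g.x_l = chi g l * x_l.\<close>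

definition bprod :: "('g, 'b) monoid_scheme \<Rightarrow> nat \<Rightarrow> (nat \<Rightarrow> nat \<Rightarrow> 'k::field)
    \<Rightarrow> ('g \<Rightarrow> nat \<Rightarrow> 'k) \<Rightarrow> (nat \<Rightarrow> nat) \<times> 'g \<Rightarrow> (nat \<Rightarrow> nat) \<times> 'g \<Rightarrow> ('k, 'g) skew" where
  "bprod G n q \<chi> x z =
     (case x of (\<alpha>, g) \<Rightarrow> case z of (\<gamma>, h) \<Rightarrow>
        (let (c, \<delta>) = lmc q \<alpha> n \<gamma>
         in (\<lambda>y. c * (\<Prod>l\<in>{1..n}. \<chi> g l ^ \<gamma> l) * xb n \<delta> (g \<otimes>\<^bsub>G\<^esub> h) y)))"

definition smul :: "('g, 'b) monoid_scheme \<Rightarrow> nat \<Rightarrow> (nat \<Rightarrow> nat \<Rightarrow> 'k::field)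
    \<Rightarrow> ('g \<Rightarrow> nat \<Rightarrow> 'k) \<Rightarrow> ('k, 'g) skew \<Rightarrow> ('k, 'g) skew \<Rightarrow> ('k, 'g) skew" where
  "smul G n q \<chi> a b = (\<lambda>y. \<Sum>x\<in>bits n \<times> carrier G. \<Sum>z\<in>bits n \<times> carrier G.
       a x * b z * bprod G n q \<chi> x z y)"

text \<open>A cochain in Hom_{Lambda^e}(K, Lambda # G) is determined by its values on the
  free generators epsilon_beta, beta in N^n.\<close>

type_synonym ('k, 'g) cochain = "(nat \<Rightarrow> nat) \<Rightarrow> ('k, 'g) skew"

definition ecoch :: "nat \<Rightarrow> (nat \<Rightarrow> nat) \<Rightarrow> 'g \<Rightarrow> (nat \<Rightarrow> nat) \<Rightarrow> ('k::field, 'g) cochain" where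
  "ecoch n \<alpha> g \<beta> = (\<lambda>\<beta>'. if \<beta>' = \<beta> then xb n \<alpha> g else (\<lambda>_. 0))"

text \<open>Cup product f \<smile> f' = mu o (f \<otimes> f') o Delta_K, with
  Delta_K(eps_beta) = sum_{a + c = beta} prod_{k<l} q_kl^(c_k a_l) eps_a \<otimes> eps_c.\<close>

definition cup :: "('g, 'b) monoid_scheme \<Rightarrow> nat \<Rightarrow> (nat \<Rightarrow> nat \<Rightarrow> 'k::field)
    \<Rightarrow> ('g \<Rightarrow> nat \<Rightarrow> 'k) \<Rightarrow> ('k, 'g) cochain \<Rightarrow> ('k, 'g) cochain \<Rightarrow> ('k, 'g) cochain" where
  "cup G n q \<chi> f f' = (\<lambda>\<beta> y.
     \<Sum>(a, c)\<in>{(a, c). a \<in> multi n \<and> c \<in> multi n \<and> (\<forall>i. a i + c i = \<beta> i)}.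
       (\<Prod>l\<in>{1..n}. \<Prod>k\<in>{1..<l}. q k l ^ (c k * a l)) * smul G n q \<chi> (f a) (f' c) y)"

end

theory Submission
  imports Defs
begin

text \<open>Of the summands \<open>\<epsilon>_a \<otimes> \<epsilon>_c\<close> of \<open>\<Delta>(\<epsilon>_(\<beta>+\<kappa>))\<close> only \<open>(a, c) = (\<beta>, \<kappa>)\<close> survives
  the two basis cochains, with coefficient \<open>\<Prod>_(k<l) q_kl^(\<kappa>_k \<beta>_l)\<close>.  Bringing
  \<open>(x^\<alpha> \<otimes> g)(x^\<gamma> \<otimes> h) = x^\<alpha> (g.x^\<gamma>) \<otimes> gh\<close> into normal form costs \<open>\<chi>_(g,l)\<close> for each
  \<open>\<gamma>_l = 1\<close> and \<open>-q_lk = -q_kl^(-1)\<close> for each pair \<open>k < l\<close> with \<open>\<gamma>_k = \<alpha>_l = 1\<close>; if \<open>\<alpha>\<close> and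
  \<open>\<gamma>\<close> overlap, both this product and \<open>x^(\<alpha>+\<gamma>)\<close> vanish.\<close>

lemma lmc_closed_form:
  "lmc q \<alpha> m \<gamma> =
   ((\<Prod>i\<in>{1..m}. if \<alpha> i = 0 then 1 else if \<gamma> i = 0
        then (\<Prod>j\<in>{1..<i}. (- q i j) ^ (\<gamma> j)) else 0),
    (\<lambda>i. if i \<in> {1..m} \<and> \<alpha> i \<noteq> 0 then (if \<gamma> i = 0 then 1 else Suc (\<gamma> i)) else \<gamma> i))"
proof (induction m arbitrary: \<gamma>)
  case 0
  then show ?case by simp
next
  case (Suc m)
  define F where "F = (\<lambda>\<gamma>::nat\<Rightarrow>nat. \<lambda>i. if \<alpha> i = 0 then 1 else if \<gamma> i = 0
        then (\<Prod>j\<in>{1..<i}. (- q i j) ^ (\<gamma> j)) else 0)"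
  define U where "U = (\<lambda>(\<gamma>::nat\<Rightarrow>nat) m i.
        if i \<in> {1..m} \<and> \<alpha> i \<noteq> 0 then (if \<gamma> i = 0 then 1 else Suc (\<gamma> i)) else \<gamma> i)"
  have IH: "\<And>\<delta>. lmc q \<alpha> m \<delta> = (\<Prod>i\<in>{1..m}. F \<delta> i, U \<delta> m)"
    using Suc.IH unfolding F_def U_def by simp
  have update_irrelevant: "\<And>v. (\<Prod>i\<in>{1..m}. F (\<gamma>(Suc m := v)) i) = (\<Prod>i\<in>{1..m}. F \<gamma> i)"
    by (rule prod.cong) (auto simp: F_def intro!: prod.cong)
  have prod_Suc: "(\<Prod>i\<in>{1..Suc m}. F \<gamma> i) = (\<Prod>i\<in>{1..m}. F \<gamma> i) * F \<gamma> (Suc m)"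
    by (simp add: prod.nat_ivl_Suc' mult.commute)
  have "lmc q \<alpha> (Suc m) \<gamma> = (\<Prod>i\<in>{1..Suc m}. F \<gamma> i, U \<gamma> (Suc m))"
    using IH prod_Suc update_irrelevant[of 1] update_irrelevant[of "Suc (\<gamma> (Suc m))"]
    by (cases "\<alpha> (Suc m) = 0"; cases "\<gamma> (Suc m) = 0")
       (auto simp: F_def U_def le_Suc_eq atLeastLessThanSuc_atLeastAtMost intro!: ext)
  then show ?case unfolding F_def U_def by simp
qed

lemma lmc_disjoint_bits:
  assumes "\<alpha> \<in> bits n" "\<gamma> \<in> bits n" and disjoint: "\<And>i. \<alpha> i = 0 \<or> \<gamma> i = 0"
  shows "lmc q \<alpha> n \<gamma> =
    ((\<Prod>l\<in>{1..n}. \<Prod>k\<in>{1..<l}. (- q l k) ^ (\<gamma> k * \<alpha> l)), (\<lambda>i. \<alpha> i + \<gamma> i))"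
proof -
  have le1: "\<alpha> i \<le> 1" for i using assms(1) unfolding bits_def by auto
  have outside: "\<alpha> i = 0" "\<gamma> i = 0" if "i \<notin> {1..n}" for i
    using assms(1,2) that unfolding bits_def multi_def by auto
  have "(if \<alpha> l = 0 then 1 else if \<gamma> l = 0 then \<Prod>k\<in>{1..<l}. (- q l k) ^ \<gamma> k else 0)
        = (\<Prod>k\<in>{1..<l}. (- q l k) ^ (\<gamma> k * \<alpha> l))" for l
    using le1[of l] disjoint[of l] by (cases "\<alpha> l") auto
  moreover have "(if i \<in> {1..n} \<and> \<alpha> i \<noteq> 0 then (if \<gamma> i = 0 then 1 else Suc (\<gamma> i)) else \<gamma> i)
        = \<alpha> i + \<gamma> i" for i
    using le1[of i] disjoint[of i] outside[of i] by (cases "i \<in> {1..n}") auto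
  ultimately show ?thesis
    unfolding lmc_closed_form by simp
qed

lemma lmc_overlap:
  assumes "i \<in> {1..n}" "\<alpha> i \<noteq> 0" "\<gamma> i \<noteq> 0"
  shows "fst (lmc q \<alpha> n \<gamma>) = 0"
  unfolding lmc_closed_form using assms by (auto intro: prod_zero)

lemma xb_not_bits: "\<alpha> \<notin> bits n \<Longrightarrow> xb n \<alpha> g = (\<lambda>_. 0)"
  by (auto simp: xb_def)

lemma bprod_bits:
  assumes \<alpha>: "\<alpha> \<in> bits n" and \<gamma>: "\<gamma> \<in> bits n"
  shows "bprod G n q \<chi> (\<alpha>, g) (\<gamma>, h) =
    (\<lambda>y. (\<Prod>l\<in>{1..n}. \<chi> g l ^ \<gamma> l * (\<Prod>k\<in>{1..<l}. (- q l k) ^ (\<gamma> k * \<alpha> l)))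
         * xb n (\<lambda>i. \<alpha> i + \<gamma> i) (g \<otimes>\<^bsub>G\<^esub> h) y)"
proof (cases "\<forall>i. \<alpha> i = 0 \<or> \<gamma> i = 0")
  case True
  then show ?thesis
    by (simp add: bprod_def lmc_disjoint_bits[OF \<alpha> \<gamma>] prod.distrib mult_ac)
next
  case False
  then obtain i where i: "\<alpha> i \<noteq> 0" "\<gamma> i \<noteq> 0" by blast
  then have "i \<in> {1..n}" using \<alpha> unfolding bits_def multi_def by auto
  then have "fst (lmc q \<alpha> n \<gamma>) = 0" using i by (rule lmc_overlap)
  moreover have "\<not> \<alpha> i + \<gamma> i \<le> 1" using i by simp
  then have "(\<lambda>i. \<alpha> i + \<gamma> i) \<notin> bits n" unfolding bits_def by blast
  ultimately show ?thesis
    by (cases "lmc q \<alpha> n \<gamma>") (simp add: bprod_def xb_not_bits)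
qed

lemma finite_bits: "finite (bits n)"
proof -
  have "bits n \<subseteq> {f. \<forall>x. (x \<in> {1..n} \<longrightarrow> f x \<in> {0..1}) \<and> (x \<notin> {1..n} \<longrightarrow> f x = 0)}"
    unfolding bits_def multi_def by auto
  then show ?thesis by (rule finite_subset) (rule finite_set_of_finite_funs, auto)
qed

lemma finite_multi_splittings:
  "finite {(a, c). a \<in> multi n \<and> c \<in> multi n \<and> (\<forall>i. a i + c i = b i)}"
proof -
  define S where "S = {f. \<forall>x. (x \<in> {1..n} \<longrightarrow> f x \<in> (\<Union>i\<in>{1..n}. {0..b i}))
                             \<and> (x \<notin> {1..n} \<longrightarrow> f x = 0)}"
  have bounded: "a \<in> S" if "a \<in> multi n" "\<And>i. a i \<le> b i" for a
  proof -
    have "a x \<in> (\<Union>i\<in>{1..n}. {0..b i})" if "x \<in> {1..n}" for x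
      by (rule UN_I[OF that]) (simp add: \<open>\<And>i. a i \<le> b i\<close>)
    then show ?thesis using \<open>a \<in> multi n\<close> unfolding S_def multi_def by auto
  qed
  have "finite S" unfolding S_def by (rule finite_set_of_finite_funs) auto
  moreover have "{(a, c). a \<in> multi n \<and> c \<in> multi n \<and> (\<forall>i. a i + c i = b i)} \<subseteq> S \<times> S"
    using bounded by (auto, metis le_add1, metis le_add2)
  ultimately show ?thesis by (meson finite_SigmaI finite_subset)
qed

lemma smul_xb_xb:
  assumes "\<alpha> \<in> bits n" "\<gamma> \<in> bits n" "g \<in> carrier G" "h \<in> carrier G" "finite (carrier G)"
  shows "smul G n q \<chi> (xb n \<alpha> g) (xb n \<gamma> h) = bprod G n q \<chi> (\<alpha>, g) (\<gamma>, h)"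
proof
  fix y
  let ?S = "bits n \<times> carrier G"
  have finite: "finite ?S" using assms finite_bits by blast
  have mem: "(\<alpha>, g) \<in> ?S" "(\<gamma>, h) \<in> ?S" using assms by auto
  have xb_single: "xb n \<alpha> g = (\<lambda>x. if x = (\<alpha>, g) then 1 else 0)"
    "xb n \<gamma> h = (\<lambda>x. if x = (\<gamma>, h) then 1 else 0)"
    using assms by (auto simp: xb_def)
  have "smul G n q \<chi> (xb n \<alpha> g) (xb n \<gamma> h) y =
     (\<Sum>x\<in>?S. if x = (\<alpha>, g) then (\<Sum>z\<in>?S. if z = (\<gamma>, h) then bprod G n q \<chi> x z y else 0) else 0)"
    unfolding smul_def xb_single by (intro sum.cong refl) (auto intro!: sum.cong)
  also have "\<dots> = bprod G n q \<chi> (\<alpha>, g) (\<gamma>, h) y"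
    using finite mem by simp
  finally show "smul G n q \<chi> (xb n \<alpha> g) (xb n \<gamma> h) y = bprod G n q \<chi> (\<alpha>, g) (\<gamma>, h) y" .
qed

lemma cup_ecoch_ecoch:
  assumes "\<alpha> \<in> bits n" "\<gamma> \<in> bits n" "\<beta> \<in> multi n" "\<kappa> \<in> multi n"
    and "g \<in> carrier G" "h \<in> carrier G" "finite (carrier G)"
  shows "cup G n q \<chi> (ecoch n \<alpha> g \<beta>) (ecoch n \<gamma> h \<kappa>) \<beta>' =
    (if \<beta>' = (\<lambda>i. \<beta> i + \<kappa> i)
     then (\<lambda>y. (\<Prod>l\<in>{1..n}. \<Prod>k\<in>{1..<l}. q k l ^ (\<kappa> k * \<beta> l)) * bprod G n q \<chi> (\<alpha>, g) (\<gamma>, h) y)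
     else (\<lambda>_. 0))"
proof
  fix y
  let ?S = "{(a, c). a \<in> multi n \<and> c \<in> multi n \<and> (\<forall>i. a i + c i = \<beta>' i)}"
  let ?T = "\<lambda>(a, c). (\<Prod>l\<in>{1..n}. \<Prod>k\<in>{1..<l}. q k l ^ (c k * a l)) *
              smul G n q \<chi> (ecoch n \<alpha> g \<beta> a) (ecoch n \<gamma> h \<kappa> c) y"
  have smul_zero: "smul G n q \<chi> (\<lambda>_. 0) b y = 0" "smul G n q \<chi> b (\<lambda>_. 0) y = 0" for b
    by (simp_all add: smul_def)
  have off_diagonal: "?T p = 0" if "p \<noteq> (\<beta>, \<kappa>)" for p
    using that by (cases p) (auto simp: ecoch_def smul_zero)
  have "sum ?T ?S = sum ?T (?S \<inter> {(\<beta>, \<kappa>)})"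
    using finite_multi_splittings off_diagonal by (intro sum.mono_neutral_right) auto
  moreover have "(\<beta>, \<kappa>) \<in> ?S \<longleftrightarrow> \<beta>' = (\<lambda>i. \<beta> i + \<kappa> i)"
    using assms(3,4) by auto
  ultimately show "cup G n q \<chi> (ecoch n \<alpha> g \<beta>) (ecoch n \<gamma> h \<kappa>) \<beta>' y = (if \<beta>' = (\<lambda>i. \<beta> i + \<kappa> i)
     then (\<lambda>y. (\<Prod>l\<in>{1..n}. \<Prod>k\<in>{1..<l}. q k l ^ (\<kappa> k * \<beta> l)) * bprod G n q \<chi> (\<alpha>, g) (\<gamma>, h) y)
     else (\<lambda>_. 0)) y"
    by (auto simp: cup_def ecoch_def smul_xb_xb[OF assms(1,2,5,6,7)])
qed

lemma power_times_neg_inverse_power: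
  fixes x :: "'k::field"
  assumes "x \<noteq> 0"
  shows "x ^ a * (- inverse x) ^ b = x powi (int a - int b) * (-1) powi (- int b)"
proof -
  have "(- inverse x) ^ b = (-1) ^ b * inverse (x ^ b)"
    by (metis power_minus power_inverse)
  moreover have "x powi (int a - int b) = x ^ a * inverse (x ^ b)"
    using assms by (simp add: power_int_diff power_int_of_nat divide_inverse)
  moreover have "(-1::'k) powi (- int b) = (-1) ^ b"
    by (simp add: power_int_minus power_int_of_nat flip: power_inverse)
  ultimately show ?thesis by (simp only: ac_simps)
qed

lemma cup_coefficient:
  fixes q :: "nat \<Rightarrow> nat \<Rightarrow> 'k::field"
  assumes "\<And>i j. i \<in> {1..n} \<Longrightarrow> j \<in> {1..n} \<Longrightarrow> q i j \<noteq> 0"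
    and "\<And>i j. i \<in> {1..n} \<Longrightarrow> j \<in> {1..n} \<Longrightarrow> q j i = inverse (q i j)"
  shows "(\<Prod>l\<in>{1..n}. \<Prod>k\<in>{1..<l}. q k l ^ (\<kappa> k * \<beta> l))
       * (\<Prod>l\<in>{1..n}. c l * (\<Prod>k\<in>{1..<l}. (- q l k) ^ (\<gamma> k * \<alpha> l)))
     = (\<Prod>l\<in>{1..n}. c l *
          (\<Prod>k\<in>{1..<l}. q k l powi (int (\<kappa> k * \<beta> l) - int (\<gamma> k * \<alpha> l))
                        * (-1) powi (- int (\<gamma> k * \<alpha> l))))"
proof -
  have factor: "q k l ^ (\<kappa> k * \<beta> l) * (- q l k) ^ (\<gamma> k * \<alpha> l)
        = q k l powi (int (\<kappa> k * \<beta> l) - int (\<gamma> k * \<alpha> l)) * (-1) powi (- int (\<gamma> k * \<alpha> l))"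
    if "l \<in> {1..n}" "k \<in> {1..<l}" for k l
    using that assms(2)[of k l] power_times_neg_inverse_power[OF assms(1)[of k l]] by simp
  have "(\<Prod>k\<in>{1..<l}. q k l ^ (\<kappa> k * \<beta> l)) * (c l * (\<Prod>k\<in>{1..<l}. (- q l k) ^ (\<gamma> k * \<alpha> l)))
      = c l *
          (\<Prod>k\<in>{1..<l}. q k l powi (int (\<kappa> k * \<beta> l) - int (\<gamma> k * \<alpha> l))
                        * (-1) powi (- int (\<gamma> k * \<alpha> l)))"
    if "l \<in> {1..n}" for l
  proof -
    have "(\<Prod>k\<in>{1..<l}. q k l ^ (\<kappa> k * \<beta> l)) * (\<Prod>k\<in>{1..<l}. (- q l k) ^ (\<gamma> k * \<alpha> l))
        = (\<Prod>k\<in>{1..<l}. q k l powi (int (\<kappa> k * \<beta> l) - int (\<gamma> k * \<alpha> l))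
                        * (-1) powi (- int (\<gamma> k * \<alpha> l)))"
      unfolding prod.distrib[symmetric] using factor[OF that] by (rule prod.cong[OF refl])
    then show ?thesis by (simp only: mult_ac)
  qed
  then show ?thesis
    unfolding prod.distrib[symmetric] by (rule prod.cong[OF refl])
qed

theorem theorem3p4:
  fixes G :: "('g, 'b) monoid_scheme"
    and n :: nat
    and q :: "nat \<Rightarrow> nat \<Rightarrow> 'k::field_char_0"
    and \<chi> :: "'g \<Rightarrow> nat \<Rightarrow> 'k"
    and \<alpha> \<gamma> \<beta> \<kappa> :: "nat \<Rightarrow> nat"
    and g h :: 'g
  assumes n: "n \<ge> 1"
    and q_nz: "\<And>i j. i \<in> {1..n} \<Longrightarrow> j \<in> {1..n} \<Longrightarrow> q i j \<noteq> 0"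
    and q_inv: "\<And>i j. i \<in> {1..n} \<Longrightarrow> j \<in> {1..n} \<Longrightarrow> q j i = inverse (q i j)"
    and q_diag: "\<And>i. i \<in> {1..n} \<Longrightarrow> q i i = -1"
    and grp: "group G"
    and fin: "finite (carrier G)"
    and chi_nz: "\<And>g i. g \<in> carrier G \<Longrightarrow> i \<in> {1..n} \<Longrightarrow> \<chi> g i \<noteq> 0"
    and chi_one: "\<And>i. i \<in> {1..n} \<Longrightarrow> \<chi> \<one>\<^bsub>G\<^esub> i = 1"
    and chi_mult: "\<And>g h i. g \<in> carrier G \<Longrightarrow> h \<in> carrier G \<Longrightarrow> i \<in> {1..n} \<Longrightarrow>
                     \<chi> (g \<otimes>\<^bsub>G\<^esub> h) i = \<chi> g i * \<chi> h i"
    and \<alpha>: "\<alpha> \<in> bits n" and \<gamma>: "\<gamma> \<in> bits n"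
    and \<beta>: "\<beta> \<in> multi n" and \<kappa>: "\<kappa> \<in> multi n"
    and g: "g \<in> carrier G" and h: "h \<in> carrier G"
  shows "cup G n q \<chi> (ecoch n \<alpha> g \<beta>) (ecoch n \<gamma> h \<kappa>) =
    (\<lambda>\<beta>' y. (\<Prod>l\<in>{1..n}. \<chi> g l ^ \<gamma> l *
                 (\<Prod>k\<in>{1..<l}. q k l powi (int (\<kappa> k * \<beta> l) - int (\<gamma> k * \<alpha> l))
                               * (-1) powi (- int (\<gamma> k * \<alpha> l))))
             * ecoch n (\<lambda>i. \<alpha> i + \<gamma> i) (g \<otimes>\<^bsub>G\<^esub> h) (\<lambda>i. \<beta> i + \<kappa> i) \<beta>' y)"
  using cup_coefficient[where c = "\<lambda>l. \<chi> g l ^ \<gamma> l", OF q_nz q_inv]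
  unfolding cup_ecoch_ecoch[OF \<alpha> \<gamma> \<beta> \<kappa> g h fin, abs_def] bprod_bits[OF \<alpha> \<gamma>]
  by (auto simp: ecoch_def mult.assoc[symmetric] intro!: ext)

end
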